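(* Let $(G,M,\Delta)$ be a Garside structure, $(H,N,\delta)$ a parabolic substructure, and $T$ the set of $(H,N)$-reduced elements of $G$. Let $\theta\in T\setminus M$ with right $\Delta$-form $\theta=c\Delta^{-p}$, $p\ge1$, and let $b\in N$. Then $bc$ is unmovable and $bc\Delta^{-p}$ is the right $\Delta$-form of $b\theta$.
   Context: Let $G$ be a group and $M$ a submonoid with $M\cap M^{-1}=\{1\}$. Define $\alpha\le_L\beta$ iff $\alpha^{-1}\beta\in M$, and $\alpha\le_R\beta$ iff $\beta\alpha^{-1}\in M$. For $a\in M$ let $\mathrm{Div}_L(a)=\{b\in M: b\le_L a\}$, $\mathrm{Div}_R(a)=\{b\in M: b\le_R a\}$; $a$ is balanced if these coincide, and then $\mathrm{Div}(a)$ denotes this set. $M$ is Noetherian if each $a\in M$ admits an $n$ such that $a$ is not a product of more than $n$ non-trivial factors. A Garside structure $(G,M,\Delta)$: $\Delta\in M$ balanced, $M$ Noetherian, $\mathrm{Div}(\Delta)$ finite and generating $M$ as a monoid and $G$ as a group, $(G,\le_L)$ a lattice with meet $\wedge_L$. A parabolic substructure $(H,N,\delta)$: $\delta\in M$ balanced, $H$ (resp. $N$) the subgroup (resp. submonoid) generated by $\mathrm{Div}(\delta)$, and $\mathrm{Div}(\delta)=\mathrm{Div}(\Delta)\cap N$; it is assumed $H\ne\{1\}$. Put $\omega=\delta^{-1}\Delta$. $a\in M$ is unmovable if $\Delta\not\le_L a$; every $\alpha\in G$ has a unique right $\Delta$-form $\alpha=a\Delta^p$ ($a\in M$ unmovable,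 $p\in\mathbb Z$). $a\in M$ is $N$-reduced if $a\wedge_L\delta=1$. $\alpha$ with right $\Delta$-form $a\Delta^p$ is $(H,N)$-reduced if $a$ is $N$-reduced and either $p=0$, or $p<0$ and $\omega\not\le_L a$. *)

theory Defs
  imports "HOL-Algebra.Algebra"
begin

definition submonoid_of :: "('a, 'b) monoid_scheme \<Rightarrow> 'a set \<Rightarrow> bool" where
  "submonoid_of G M \<longleftrightarrow> M \<subseteq> carrier G \<and> \<one>\<^bsub>G\<^esub> \<in> M
     \<and> (\<forall>x\<in>M. \<forall>y\<in>M. x \<otimes>\<^bsub>G\<^esub> y \<in> M)"

definition pointed :: "('a, 'b) monoid_scheme \<Rightarrow> 'a set \<Rightarrow> bool" where
  "pointed G M \<longleftrightarrow> M \<inter> (\<lambda>x. inv\<^bsub>G\<^esub> x) ` M = {\<one>\<^bsub>G\<^esub>}"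

definition leL :: "('a, 'b) monoid_scheme \<Rightarrow> 'a set \<Rightarrow> 'a \<Rightarrow> 'a \<Rightarrow> bool" where
  "leL G M x y \<longleftrightarrow> inv\<^bsub>G\<^esub> x \<otimes>\<^bsub>G\<^esub> y \<in> M"

definition leR :: "('a, 'b) monoid_scheme \<Rightarrow> 'a set \<Rightarrow> 'a \<Rightarrow> 'a \<Rightarrow> bool" where
  "leR G M x y \<longleftrightarrow> y \<otimes>\<^bsub>G\<^esub> inv\<^bsub>G\<^esub> x \<in> M"

definition DivL :: "('a, 'b) monoid_scheme \<Rightarrow> 'a set \<Rightarrow> 'a \<Rightarrow> 'a set" where
  "DivL G M a = {b \<in> M. leL G M b a}"

definition DivR :: "('a, 'b) monoid_scheme \<Rightarrow> 'a set \<Rightarrow> 'a \<Rightarrow> 'a set" where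
  "DivR G M a = {b \<in> M. leR G M b a}"

definition balanced :: "('a, 'b) monoid_scheme \<Rightarrow> 'a set \<Rightarrow> 'a \<Rightarrow> bool" where
  "balanced G M a \<longleftrightarrow> a \<in> M \<and> DivL G M a = DivR G M a"

text \<open>Div(a), meaningful for balanced a.\<close>
definition Div :: "('a, 'b) monoid_scheme \<Rightarrow> 'a set \<Rightarrow> 'a \<Rightarrow> 'a set" where
  "Div G M a = DivL G M a"

definition lprod :: "('a, 'b) monoid_scheme \<Rightarrow> 'a list \<Rightarrow> 'a" where
  "lprod G xs = foldr (\<lambda>x y. x \<otimes>\<^bsub>G\<^esub> y) xs \<one>\<^bsub>G\<^esub>"

definition noetherian :: "('a, 'b) monoid_scheme \<Rightarrow> 'a set \<Rightarrow> bool" where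
  "noetherian G M \<longleftrightarrow> (\<forall>a\<in>M. \<exists>n::nat. \<forall>xs. set xs \<subseteq> M - {\<one>\<^bsub>G\<^esub>} \<and> lprod G xs = a
      \<longrightarrow> length xs \<le> n)"

definition monoid_gen :: "('a, 'b) monoid_scheme \<Rightarrow> 'a set \<Rightarrow> 'a set" where
  "monoid_gen G S = {lprod G xs | xs. set xs \<subseteq> S}"

definition is_glbL :: "('a, 'b) monoid_scheme \<Rightarrow> 'a set \<Rightarrow> 'a \<Rightarrow> 'a \<Rightarrow> 'a \<Rightarrow> bool" where
  "is_glbL G M x y z \<longleftrightarrow> z \<in> carrier G \<and> leL G M z x \<and> leL G M z y
     \<and> (\<forall>w\<in>carrier G. leL G M w x \<and> leL G M w y \<longrightarrow> leL G M w z)"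

definition is_lubL :: "('a, 'b) monoid_scheme \<Rightarrow> 'a set \<Rightarrow> 'a \<Rightarrow> 'a \<Rightarrow> 'a \<Rightarrow> bool" where
  "is_lubL G M x y z \<longleftrightarrow> z \<in> carrier G \<and> leL G M x z \<and> leL G M y z
     \<and> (\<forall>w\<in>carrier G. leL G M x w \<and> leL G M y w \<longrightarrow> leL G M z w)"

definition lattice_L :: "('a, 'b) monoid_scheme \<Rightarrow> 'a set \<Rightarrow> bool" where
  "lattice_L G M \<longleftrightarrow> (\<forall>x\<in>carrier G. \<forall>y\<in>carrier G.
      (\<exists>z. is_glbL G M x y z) \<and> (\<exists>z. is_lubL G M x y z))"

definition meetL :: "('a, 'b) monoid_scheme \<Rightarrow> 'a set \<Rightarrow> 'a \<Rightarrow> 'a \<Rightarrow> 'a" where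
  "meetL G M x y = (THE z. is_glbL G M x y z)"

definition garside :: "('a, 'b) monoid_scheme \<Rightarrow> 'a set \<Rightarrow> 'a \<Rightarrow> bool" where
  "garside G M \<Delta> \<longleftrightarrow> group G \<and> submonoid_of G M \<and> pointed G M
     \<and> balanced G M \<Delta> \<and> noetherian G M \<and> finite (Div G M \<Delta>)
     \<and> monoid_gen G (Div G M \<Delta>) = M \<and> generate G (Div G M \<Delta>) = carrier G
     \<and> lattice_L G M"

definition parabolic :: "('a, 'b) monoid_scheme \<Rightarrow> 'a set \<Rightarrow> 'a \<Rightarrow> 'a set \<Rightarrow> 'a set \<Rightarrow> 'a \<Rightarrow> bool" where
  "parabolic G M \<Delta> H N \<delta> \<longleftrightarrow> \<delta> \<in> M \<and> balanced G M \<delta>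
     \<and> H = generate G (Div G M \<delta>) \<and> N = monoid_gen G (Div G M \<delta>)
     \<and> Div G M \<delta> = Div G M \<Delta> \<inter> N \<and> H \<noteq> {\<one>\<^bsub>G\<^esub>}"

definition unmovable :: "('a, 'b) monoid_scheme \<Rightarrow> 'a set \<Rightarrow> 'a \<Rightarrow> 'a \<Rightarrow> bool" where
  "unmovable G M \<Delta> a \<longleftrightarrow> a \<in> M \<and> \<not> leL G M \<Delta> a"

definition right_form :: "('a, 'b) monoid_scheme \<Rightarrow> 'a set \<Rightarrow> 'a \<Rightarrow> 'a \<Rightarrow> 'a \<Rightarrow> int \<Rightarrow> bool" where
  "right_form G M \<Delta> \<alpha> a p \<longleftrightarrow> unmovable G M \<Delta> a \<and> \<alpha> = a \<otimes>\<^bsub>G\<^esub> (\<Delta> [^]\<^bsub>G\<^esub> p)"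

definition N_reduced :: "('a, 'b) monoid_scheme \<Rightarrow> 'a set \<Rightarrow> 'a \<Rightarrow> 'a \<Rightarrow> bool" where
  "N_reduced G M \<delta> a \<longleftrightarrow> a \<in> M \<and> meetL G M a \<delta> = \<one>\<^bsub>G\<^esub>"

definition HN_reduced :: "('a, 'b) monoid_scheme \<Rightarrow> 'a set \<Rightarrow> 'a \<Rightarrow> 'a \<Rightarrow> 'a \<Rightarrow> bool" where
  "HN_reduced G M \<Delta> \<delta> \<alpha> \<longleftrightarrow> \<alpha> \<in> carrier G \<and> (\<exists>a p. right_form G M \<Delta> \<alpha> a p
     \<and> N_reduced G M \<delta> a
     \<and> (p = 0 \<or> (p < 0 \<and> \<not> leL G M (inv\<^bsub>G\<^esub> \<delta> \<otimes>\<^bsub>G\<^esub> \<Delta>) a)))"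

end

theory Submission
  imports Defs
begin

text \<open>
  Write \<open>b \<in> N\<close> as a right divisor of a power of \<open>\<delta>\<close>: \<open>m b = \<delta>\<^sup>k\<close> with \<open>m \<in> M\<close>. If
  \<open>\<Delta> \<le>\<^sub>L b c\<close>, then \<open>\<Delta> \<le>\<^sub>L m \<Delta> \<le>\<^sub>L \<delta>\<^sup>k c\<close>, and as \<open>\<Delta> = \<delta> \<omega>\<close> it suffices to show that
  \<open>\<omega> \<le>\<^sub>L \<delta> x\<close> implies \<open>\<omega> \<le>\<^sub>L x\<close> for \<open>x \<in> M\<close>. The meet \<open>z\<close> of \<open>\<omega>\<close> and \<open>x\<close> then satisfies
  \<open>z \<le>\<^sub>L \<omega> \<le>\<^sub>L \<delta> z\<close>; conjugating \<open>z\<inverse>\<omega>\<close> by \<open>\<Delta>\<close> yields a divisor \<open>u\<close> of \<open>\<delta>\<close> with \<open>u \<delta>\<close>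
  again a divisor of \<open>\<delta>\<close>, which forces \<open>u = 1\<close> and hence \<open>z = \<omega>\<close>. The hypotheses on \<open>\<theta>\<close>
  serve, through uniqueness of right \<open>\<Delta>\<close>-forms, only to give \<open>\<omega> \<not>\<le>\<^sub>L c\<close>.
\<close>

lemma (in group) mult_inv_cancel_left [simp]:
  "x \<in> carrier G \<Longrightarrow> y \<in> carrier G \<Longrightarrow> x \<otimes> (inv x \<otimes> y) = y"
  by (simp add: m_assoc[symmetric])

lemma (in group) inv_mult_cancel_left [simp]:
  "x \<in> carrier G \<Longrightarrow> y \<in> carrier G \<Longrightarrow> inv x \<otimes> (x \<otimes> y) = y"
  by (simp add: m_assoc[symmetric])

lemma lprod_Nil [simp]: "lprod G [] = \<one>\<^bsub>G\<^esub>"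
  by (simp add: lprod_def)

lemma lprod_Cons [simp]: "lprod G (x # xs) = x \<otimes>\<^bsub>G\<^esub> lprod G xs"
  by (simp add: lprod_def)

lemma (in monoid) lprod_closed: "set xs \<subseteq> carrier G \<Longrightarrow> lprod G xs \<in> carrier G"
  by (induct xs) auto

lemma (in monoid) lprod_append:
  "set xs \<subseteq> carrier G \<Longrightarrow> set ys \<subseteq> carrier G \<Longrightarrow> lprod G (xs @ ys) = lprod G xs \<otimes> lprod G ys"
  by (induct xs) (auto simp: m_assoc lprod_closed)

lemma (in monoid) monoid_gen_mult:
  assumes "S \<subseteq> carrier G" "x \<in> monoid_gen G S" "y \<in> monoid_gen G S"
  shows "x \<otimes> y \<in> monoid_gen G S"
proof -
  obtain xs ys where "set xs \<subseteq> S" "set ys \<subseteq> S" "x = lprod G xs" "y = lprod G ys"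
    using assms(2,3) by (auto simp: monoid_gen_def)
  then show ?thesis
    using assms(1) by (auto simp: monoid_gen_def lprod_append intro!: exI[of _ "xs @ ys"])
qed

lemma (in monoid) monoid_gen_incl: "S \<subseteq> carrier G \<Longrightarrow> x \<in> S \<Longrightarrow> x \<in> monoid_gen G S"
  unfolding monoid_gen_def by (intro CollectI exI[of _ "[x]"]) auto

locale pointed_submonoid = group G for G (structure) +
  fixes M :: "'a set"
  assumes M_subset: "M \<subseteq> carrier G"
    and one_in_M [simp]: "\<one> \<in> M"
    and mult_in_M [intro]: "x \<in> M \<Longrightarrow> y \<in> M \<Longrightarrow> x \<otimes> y \<in> M"
    and M_pointed: "x \<in> M \<Longrightarrow> inv x \<in> M \<Longrightarrow> x = \<one>"
begin

lemma M_carrier [simp]: "x \<in> M \<Longrightarrow> x \<in> carrier G"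
  using M_subset by auto

lemma pow_in_M: "x \<in> M \<Longrightarrow> x [^] (n::nat) \<in> M"
  by (induct n) auto

lemma monoid_gen_subset_M: "S \<subseteq> M \<Longrightarrow> monoid_gen G S \<subseteq> M"
proof -
  assume "S \<subseteq> M"
  then have "set xs \<subseteq> S \<Longrightarrow> lprod G xs \<in> M" for xs
    by (induct xs) auto
  then show ?thesis by (auto simp: monoid_gen_def)
qed

lemma one_leL_iff: "x \<in> carrier G \<Longrightarrow> leL G M \<one> x \<longleftrightarrow> x \<in> M"
  by (simp add: leL_def)

lemma leL_trans:
  "\<lbrakk>x \<in> carrier G; y \<in> carrier G; z \<in> carrier G; leL G M x y; leL G M y z\<rbrakk> \<Longrightarrow> leL G M x z"
  unfolding leL_def using mult_in_M[of "inv x \<otimes> y" "inv y \<otimes> z"] by (simp add: m_assoc)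

lemma leL_mult_left_cancel:
  "\<lbrakk>g \<in> carrier G; x \<in> carrier G; y \<in> carrier G\<rbrakk> \<Longrightarrow> leL G M (g \<otimes> x) (g \<otimes> y) \<longleftrightarrow> leL G M x y"
  unfolding leL_def by (simp add: m_assoc inv_mult_group)

lemma leL_mult_right: "x \<in> carrier G \<Longrightarrow> y \<in> M \<Longrightarrow> leL G M x (x \<otimes> y)"
  unfolding leL_def by (simp add: m_assoc[symmetric])

lemma Div_iff_leL: "balanced G M B \<Longrightarrow> x \<in> Div G M B \<longleftrightarrow> x \<in> M \<and> inv x \<otimes> B \<in> M"
  by (simp add: Div_def DivL_def leL_def)

lemma Div_iff_leR: "balanced G M B \<Longrightarrow> x \<in> Div G M B \<longleftrightarrow> x \<in> M \<and> B \<otimes> inv x \<in> M"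
  by (simp add: Div_def balanced_def DivR_def leR_def)

lemma Div_subset_M: "balanced G M B \<Longrightarrow> Div G M B \<subseteq> M"
  using Div_iff_leL by blast

lemma left_complement_in_Div:
  assumes B: "balanced G M B" and x: "x \<in> Div G M B"
  shows "inv x \<otimes> B \<in> Div G M B"
proof -
  have "B \<in> M" "x \<in> M" "inv x \<otimes> B \<in> M" using B x Div_iff_leL[OF B] by (auto simp: balanced_def)
  moreover have "B \<otimes> inv (inv x \<otimes> B) = x" using \<open>B \<in> M\<close> \<open>x \<in> M\<close> by (simp add: inv_mult_group m_assoc)
  ultimately show ?thesis unfolding Div_iff_leR[OF B] by simp
qed

lemma right_complement_in_Div:
  assumes B: "balanced G M B" and x: "x \<in> Div G M B"
  shows "B \<otimes> inv x \<in> Div G M B"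
proof -
  have "B \<in> M" "x \<in> M" "B \<otimes> inv x \<in> M" using B x Div_iff_leR[OF B] by (auto simp: balanced_def)
  moreover have "inv (B \<otimes> inv x) \<otimes> B = x" using \<open>B \<in> M\<close> \<open>x \<in> M\<close> by (simp add: inv_mult_group m_assoc)
  ultimately show ?thesis unfolding Div_iff_leL[OF B] by simp
qed

text \<open>Conjugation by a balanced element is the square of the complement map.\<close>

lemma inv_conj_in_Div:
  assumes B: "balanced G M B" and x: "x \<in> Div G M B"
  shows "inv B \<otimes> x \<otimes> B \<in> Div G M B"
proof -
  have "B \<in> M" "x \<in> M" using B x Div_subset_M by (auto simp: balanced_def)
  then have "inv (inv x \<otimes> B) \<otimes> B = inv B \<otimes> x \<otimes> B" by (simp add: inv_mult_group m_assoc)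
  then show ?thesis using left_complement_in_Div[OF B left_complement_in_Div[OF B x]] by simp
qed

lemma conj_in_Div:
  assumes B: "balanced G M B" and x: "x \<in> Div G M B"
  shows "B \<otimes> x \<otimes> inv B \<in> Div G M B"
proof -
  have "B \<in> M" "x \<in> M" using B x Div_subset_M by (auto simp: balanced_def)
  then have "B \<otimes> inv (B \<otimes> inv x) = B \<otimes> x \<otimes> inv B" by (simp add: inv_mult_group m_assoc)
  then show ?thesis using right_complement_in_Div[OF B right_complement_in_Div[OF B x]] by simp
qed

lemma conj_pow_in_Div:
  assumes B: "balanced G M B"
  shows "x \<in> Div G M B \<Longrightarrow> B [^] (k::nat) \<otimes> x \<otimes> inv (B [^] k) \<in> Div G M B"
proof (induct k arbitrary: x)
  case 0
  then show ?case using Div_subset_M[OF B] by auto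
next
  case (Suc k)
  have "B \<in> carrier G" "x \<in> carrier G" using B Suc.prems Div_subset_M[OF B] by (auto simp: balanced_def)
  then have "B [^] Suc k \<otimes> x \<otimes> inv (B [^] Suc k) = B [^] k \<otimes> (B \<otimes> x \<otimes> inv B) \<otimes> inv (B [^] k)"
    by (simp add: inv_mult_group m_assoc)
  then show ?case using Suc.hyps[OF conj_in_Div[OF B Suc.prems]] by simp
qed

lemma left_multiple_is_pow:
  assumes B: "balanced G M B" and b: "b \<in> monoid_gen G (Div G M B)"
  shows "\<exists>k::nat. \<exists>m\<in>M. m \<otimes> b = B [^] k"
proof -
  have DivB: "Div G M B \<subseteq> carrier G" using Div_subset_M[OF B] by auto
  have "\<exists>k::nat. \<exists>m\<in>M. m \<otimes> lprod G xs = B [^] k" if "set xs \<subseteq> Div G M B" for xs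
    using that
  proof (induct xs rule: rev_induct)
    case Nil
    show ?case by (intro exI[of _ 0] bexI[of _ \<one>]) auto
  next
    case (snoc s xs)
    then obtain k m where m: "m \<in> M" "m \<otimes> lprod G xs = B [^] (k::nat)" by auto
    have s: "s \<in> Div G M B" and sc: "s \<in> carrier G" and xsc: "set xs \<subseteq> carrier G"
      using snoc DivB by auto
    have xs: "lprod G xs \<in> carrier G" using xsc by (rule lprod_closed)
    define r where "r = B [^] k \<otimes> (B \<otimes> inv s) \<otimes> inv (B [^] k)"
    have r: "r \<in> M"
      unfolding r_def using conj_pow_in_Div[OF B right_complement_in_Div[OF B s]] Div_subset_M[OF B]
      by auto
    have Bc: "B \<in> carrier G" using B by (simp add: balanced_def)
    have "(r \<otimes> m) \<otimes> lprod G (xs @ [s]) = r \<otimes> (m \<otimes> lprod G xs) \<otimes> s"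
      using xsc sc xs r m(1) by (simp add: lprod_append m_assoc)
    also have "\<dots> = B [^] Suc k"
      using m(2) sc Bc by (simp add: r_def m_assoc)
    finally show ?case using r m(1) by blast
  qed
  then show ?thesis using b by (auto simp: monoid_gen_def)
qed

lemma eq_one_if_mult_in_Div:
  assumes B: "balanced G M B" and x: "x \<in> M" and xB: "x \<otimes> B \<in> Div G M B"
  shows "x = \<one>"
proof -
  have "B \<otimes> inv (x \<otimes> B) = inv x" using B x by (simp add: balanced_def inv_mult_group m_assoc)
  then show ?thesis using M_pointed[OF x] xB Div_iff_leR[OF B] by simp
qed

end

locale garside_monoid = pointed_submonoid +
  fixes \<Delta> :: 'a
  assumes balanced_Delta: "balanced G M \<Delta>"
    and Div_Delta_generates: "monoid_gen G (Div G M \<Delta>) = M"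
begin

lemma Delta_in_M [simp]: "\<Delta> \<in> M"
  using balanced_Delta by (simp add: balanced_def)

lemma Delta_carrier [simp]: "\<Delta> \<in> carrier G"
  by simp

lemma conj_in_M_if_conj_Div:
  assumes g: "g \<in> carrier G" and gen: "\<And>s. s \<in> Div G M \<Delta> \<Longrightarrow> g \<otimes> s \<otimes> inv g \<in> M"
    and x: "x \<in> M"
  shows "g \<otimes> x \<otimes> inv g \<in> M"
proof -
  have DivD: "Div G M \<Delta> \<subseteq> carrier G" using Div_subset_M[OF balanced_Delta] by auto
  obtain xs where xs: "set xs \<subseteq> Div G M \<Delta>" "x = lprod G xs"
    using x Div_Delta_generates by (auto simp: monoid_gen_def)
  have "g \<otimes> lprod G xs \<otimes> inv g \<in> M" using xs(1)
  proof (induct xs)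
    case Nil
    then show ?case using g by simp
  next
    case (Cons s xs)
    have "s \<in> carrier G" "lprod G xs \<in> carrier G" using Cons.prems DivD by (auto intro: lprod_closed)
    then have "g \<otimes> lprod G (s # xs) \<otimes> inv g = (g \<otimes> s \<otimes> inv g) \<otimes> (g \<otimes> lprod G xs \<otimes> inv g)"
      using g by (simp add: m_assoc)
    then show ?case using Cons gen by auto
  qed
  then show ?thesis using xs by simp
qed

lemma conj_Delta_in_M:
  assumes x: "x \<in> M" shows "\<Delta> \<otimes> x \<otimes> inv \<Delta> \<in> M" "inv \<Delta> \<otimes> x \<otimes> \<Delta> \<in> M"
proof -
  have "\<Delta> \<otimes> s \<otimes> inv \<Delta> \<in> M" "inv \<Delta> \<otimes> s \<otimes> inv (inv \<Delta>) \<in> M" if "s \<in> Div G M \<Delta>" for s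
    using conj_in_Div[OF balanced_Delta that] inv_conj_in_Div[OF balanced_Delta that]
      Div_subset_M[OF balanced_Delta] by auto
  from conj_in_M_if_conj_Div[OF Delta_carrier this(1) x] conj_in_M_if_conj_Div[OF _ this(2) x]
  show "\<Delta> \<otimes> x \<otimes> inv \<Delta> \<in> M" "inv \<Delta> \<otimes> x \<otimes> \<Delta> \<in> M" by simp_all
qed

lemma Delta_leL_mult: "x \<in> M \<Longrightarrow> leL G M \<Delta> (x \<otimes> \<Delta>)"
  using leL_mult_right[of \<Delta> "inv \<Delta> \<otimes> x \<otimes> \<Delta>"] conj_Delta_in_M(2) by (simp add: m_assoc)

lemma Delta_leL_mult_pow: "x \<in> M \<Longrightarrow> leL G M \<Delta> (x \<otimes> \<Delta> [^] Suc n)"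
  using Delta_leL_mult[of "x \<otimes> \<Delta> [^] n"] pow_in_M[of \<Delta> n] by (simp add: m_assoc mult_in_M)

lemma right_form_exponent_le:
  assumes a: "right_form G M \<Delta> \<alpha> a p" and a': "right_form G M \<Delta> \<alpha> a' p'"
  shows "p \<le> p'"
proof (rule ccontr)
  assume "\<not> p \<le> p'"
  then have n: "p - p' = int (Suc (nat (p - p') - 1))" by simp
  have aM: "a \<in> M" and a'M: "a' \<in> M" and a'_unmovable: "\<not> leL G M \<Delta> a'"
    using a a' by (auto simp: right_form_def unmovable_def)
  have "a' = a' \<otimes> \<Delta> [^] p' \<otimes> inv (\<Delta> [^] p')"
    using a'M by (simp add: m_assoc)
  also have "\<dots> = a \<otimes> \<Delta> [^] p \<otimes> inv (\<Delta> [^] p')"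
    using a a' by (simp add: right_form_def)
  also have "\<dots> = a \<otimes> \<Delta> [^] (p - p')"
    using aM by (simp add: int_pow_diff m_assoc)
  finally show False
    using Delta_leL_mult_pow[OF aM] a'_unmovable n by (metis int_pow_int)
qed

lemma right_form_unique:
  assumes a: "right_form G M \<Delta> \<alpha> a p" and a': "right_form G M \<Delta> \<alpha> a' p'"
  shows "a' = a \<and> p' = p"
proof -
  have p: "p' = p" using right_form_exponent_le[OF a a'] right_form_exponent_le[OF a' a] by simp
  have "a \<in> M" "a' \<in> M" using a a' by (auto simp: right_form_def unmovable_def)
  moreover have "a \<otimes> \<Delta> [^] p = a' \<otimes> \<Delta> [^] p" using a a' p by (simp add: right_form_def)
  ultimately show ?thesis using p by simp
qed

end

locale garside_parabolic = garside_monoid +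
  fixes \<delta> :: 'a
  assumes balanced_delta: "balanced G M \<delta>"
    and Div_delta_parabolic: "Div G M \<delta> = Div G M \<Delta> \<inter> monoid_gen G (Div G M \<delta>)"
    and meet_exists: "x \<in> carrier G \<Longrightarrow> y \<in> carrier G \<Longrightarrow> \<exists>z. is_glbL G M x y z"
begin

abbreviation N :: "'a set" where "N \<equiv> monoid_gen G (Div G M \<delta>)"

abbreviation \<omega> :: 'a where "\<omega> \<equiv> inv \<delta> \<otimes> \<Delta>"

lemma delta_in_M [simp]: "\<delta> \<in> M"
  using balanced_delta by (simp add: balanced_def)

lemma delta_carrier [simp]: "\<delta> \<in> carrier G"
  by simp

lemma Div_delta_carrier: "Div G M \<delta> \<subseteq> carrier G"
  using Div_subset_M[OF balanced_delta] by auto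

lemma N_subset_M: "N \<subseteq> M"
  using monoid_gen_subset_M[OF Div_subset_M[OF balanced_delta]] .

lemma delta_in_Div_delta: "\<delta> \<in> Div G M \<delta>"
  using balanced_delta by (simp add: Div_iff_leL)

lemma omega_in_M [simp]: "\<omega> \<in> M"
  using delta_in_Div_delta Div_delta_parabolic Div_iff_leL[OF balanced_Delta] by auto

lemma omega_leL_Delta: "leL G M \<omega> \<Delta>"
  using conj_Delta_in_M(2)[OF delta_in_M] by (simp add: leL_def inv_mult_group m_assoc)

lemma omega_eq_if_between:
  assumes e: "e \<in> M" and e_omega: "leL G M e \<omega>" and omega_e: "leL G M \<omega> (\<delta> \<otimes> e)"
  shows "e = \<omega>"
proof -
  define e' where "e' = inv e \<otimes> \<omega>"
  define x where "x = \<Delta> \<otimes> e' \<otimes> inv \<Delta>"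
  have e'M: "e' \<in> M" using e_omega by (simp add: leL_def e'_def)
  have ec: "e \<in> carrier G" using e by simp
  have "\<delta> \<otimes> inv x = \<Delta> \<otimes> (inv \<omega> \<otimes> (\<delta> \<otimes> e)) \<otimes> inv \<Delta>"
    using ec by (simp add: x_def e'_def inv_mult_group m_assoc)
  then have x_Div: "x \<in> Div G M \<delta>"
    using conj_Delta_in_M(1)[OF e'M] conj_Delta_in_M(1) omega_e
    by (simp add: Div_iff_leR[OF balanced_delta] x_def leL_def)
  have x_delta_N: "x \<otimes> \<delta> \<in> N"
    using x_Div delta_in_Div_delta Div_delta_carrier by (blast intro: monoid_gen_mult monoid_gen_incl)
  have "\<Delta> \<otimes> inv (x \<otimes> \<delta>) = \<Delta> \<otimes> e \<otimes> inv \<Delta>"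
    using ec by (simp add: x_def e'_def inv_mult_group m_assoc)
  then have "x \<otimes> \<delta> \<in> Div G M \<Delta>"
    using x_delta_N conj_Delta_in_M(1)[OF e] N_subset_M
    unfolding Div_iff_leR[OF balanced_Delta] by auto
  then have "x \<otimes> \<delta> \<in> Div G M \<delta>"
    using x_delta_N Div_delta_parabolic by blast
  then have "x = \<one>"
    using eq_one_if_mult_in_Div[OF balanced_delta] x_Div Div_subset_M[OF balanced_delta] by blast
  moreover have "e' = inv \<Delta> \<otimes> x \<otimes> \<Delta>"
    using e'M by (simp add: x_def m_assoc)
  ultimately have "e' = \<one>"
    by simp
  moreover have "\<omega> = e \<otimes> e'"
    using ec by (simp add: e'_def)
  ultimately show ?thesis
    using ec by simp
qed

text \<open>The meet \<open>z\<close> of \<open>\<omega>\<close> and \<open>x\<close> inherits \<open>\<omega> \<le>\<^sub>L \<delta> z\<close>, because \<open>\<delta>\<inverse>\<omega>\<close> lies below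
  both \<open>\<omega>\<close> and \<open>x\<close>.\<close>

lemma omega_leL_cancel_delta:
  assumes x: "x \<in> M" and omega_x: "leL G M \<omega> (\<delta> \<otimes> x)"
  shows "leL G M \<omega> x"
proof -
  have xc: "x \<in> carrier G" using x by simp
  obtain z where z: "is_glbL G M \<omega> x z" using meet_exists[of \<omega> x] xc by auto
  then have zc: "z \<in> carrier G" and z_omega: "leL G M z \<omega>" and z_x: "leL G M z x"
    and z_max: "\<And>v. v \<in> carrier G \<Longrightarrow> leL G M v \<omega> \<Longrightarrow> leL G M v x \<Longrightarrow> leL G M v z"
    by (auto simp: is_glbL_def)
  define v where "v = inv \<delta> \<otimes> \<omega>"
  have vc: "v \<in> carrier G" and delta_v: "\<delta> \<otimes> v = \<omega>" by (simp_all add: v_def)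
  have "leL G M (\<delta> \<otimes> v) (\<delta> \<otimes> \<omega>)"
    using omega_leL_Delta delta_v by simp
  then have "leL G M v \<omega>"
    by (rule iffD1[OF leL_mult_left_cancel[OF delta_carrier vc M_carrier[OF omega_in_M]]])
  moreover have "leL G M v x"
    using omega_x leL_mult_left_cancel[OF delta_carrier vc xc] delta_v by simp
  ultimately have "leL G M \<omega> (\<delta> \<otimes> z)"
    using z_max[OF vc] leL_mult_left_cancel[OF delta_carrier vc zc] delta_v by simp
  moreover have "z \<in> M"
    using z_max[of \<one>] one_leL_iff x zc by simp
  ultimately have "z = \<omega>"
    using omega_eq_if_between z_omega by simp
  then show ?thesis using z_x by simp
qed

lemma omega_leL_cancel_delta_pow:
  assumes x: "x \<in> M" and omega_x: "leL G M \<omega> (\<delta> [^] (k::nat) \<otimes> x)"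
  shows "leL G M \<omega> x"
  using omega_x
proof (induct k)
  case 0
  then show ?case using x by simp
next
  case (Suc k)
  have "leL G M \<omega> (\<delta> \<otimes> (\<delta> [^] k \<otimes> x))"
    using Suc.prems x unfolding nat_pow_Suc2[OF delta_carrier] by (simp add: m_assoc)
  moreover have "\<delta> [^] k \<otimes> x \<in> M"
    by (intro mult_in_M pow_in_M delta_in_M x)
  ultimately have "leL G M \<omega> (\<delta> [^] k \<otimes> x)"
    using omega_leL_cancel_delta by blast
  then show ?case using Suc.hyps by blast
qed

lemma unmovable_N_mult:
  assumes c: "unmovable G M \<Delta> c" and c_omega: "\<not> leL G M \<omega> c" and b: "b \<in> N"
  shows "unmovable G M \<Delta> (b \<otimes> c)"
proof -
  have cM: "c \<in> M" and bM: "b \<in> M" using c b N_subset_M by (auto simp: unmovable_def)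
  have omega_c: "\<omega> \<in> carrier G" by simp
  obtain k m where mM: "m \<in> M" and m_b: "m \<otimes> b = \<delta> [^] (k::nat)"
    using left_multiple_is_pow[OF balanced_delta b] by auto
  have pow_c: "\<delta> [^] k \<otimes> c \<in> carrier G" using cM by simp
  have not_Delta: "\<not> leL G M \<Delta> (\<delta> [^] k \<otimes> c)"
  proof (cases k)
    case 0
    then show ?thesis using c by (simp add: unmovable_def)
  next
    case (Suc j)
    have yc: "\<delta> [^] j \<otimes> c \<in> carrier G" using cM by simp
    have "\<not> leL G M \<omega> (\<delta> [^] j \<otimes> c)"
      using omega_leL_cancel_delta_pow[OF cM] c_omega by blast
    then have "\<not> leL G M (\<delta> \<otimes> \<omega>) (\<delta> \<otimes> (\<delta> [^] j \<otimes> c))"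
      using leL_mult_left_cancel[OF delta_carrier omega_c yc] by blast
    moreover have "\<delta> [^] k \<otimes> c = \<delta> \<otimes> (\<delta> [^] j \<otimes> c)"
      unfolding Suc nat_pow_Suc2[OF delta_carrier] using cM by (simp add: m_assoc)
    ultimately show ?thesis by simp
  qed
  have "\<not> leL G M \<Delta> (b \<otimes> c)"
  proof
    assume "leL G M \<Delta> (b \<otimes> c)"
    then have "leL G M (m \<otimes> \<Delta>) (m \<otimes> (b \<otimes> c))"
      using mM bM cM by (simp only: leL_mult_left_cancel M_carrier Delta_carrier m_closed)
    moreover have "m \<otimes> (b \<otimes> c) = \<delta> [^] k \<otimes> c"
      using mM bM cM m_b by (simp add: m_assoc[symmetric])
    ultimately have "leL G M (m \<otimes> \<Delta>) (\<delta> [^] k \<otimes> c)" by simp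
    with Delta_leL_mult[OF mM] have "leL G M \<Delta> (\<delta> [^] k \<otimes> c)"
      by (rule leL_trans[OF Delta_carrier m_closed[OF M_carrier[OF mM] Delta_carrier] pow_c])
    with not_Delta show False ..
  qed
  then show ?thesis using mult_in_M[OF bM cM] by (simp add: unmovable_def)
qed

end

lemma garside_parabolic_if_parabolic:
  fixes G (structure)
  assumes "garside G M \<Delta>" and "parabolic G M \<Delta> H N \<delta>"
  shows "garside_parabolic G M \<Delta> \<delta>"
proof -
  interpret group G using assms(1) by (simp add: garside_def)
  have sub: "submonoid_of G M" and pt: "pointed G M"
    using assms(1) by (simp_all add: garside_def)
  have "x = \<one>" if "x \<in> M" "inv x \<in> M" for x
  proof -
    have "x \<in> M \<inter> (\<lambda>x. inv x) ` M"
      using that sub by (auto simp: submonoid_of_def intro!: image_eqI[of x _ "inv x"])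
    then show ?thesis using pt by (auto simp: pointed_def)
  qed
  then have "pointed_submonoid G M"
    using is_group sub
    by (simp add: pointed_submonoid_def pointed_submonoid_axioms_def submonoid_of_def)
  then have "garside_monoid G M \<Delta>"
    using assms(1) by (simp add: garside_monoid_def garside_monoid_axioms_def garside_def)
  moreover have "garside_parabolic_axioms G M \<Delta> \<delta>"
    using assms unfolding garside_parabolic_axioms_def garside_def parabolic_def lattice_L_def
    by blast
  ultimately show ?thesis by (rule garside_parabolic.intro)
qed

theorem lemma3p9:
  fixes G (structure)
  assumes "garside G M \<Delta>"
    and "parabolic G M \<Delta> H N \<delta>"
    and "T = {\<alpha> \<in> carrier G. HN_reduced G M \<Delta> \<delta> \<alpha>}"
    and "\<theta> \<in> T - M"
    and "right_form G M \<Delta> \<theta> c (- p)"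
    and "(p::int) \<ge> 1"
    and "b \<in> N"
  shows "unmovable G M \<Delta> (b \<otimes>\<^bsub>G\<^esub> c)
    \<and> right_form G M \<Delta> (b \<otimes>\<^bsub>G\<^esub> \<theta>) (b \<otimes>\<^bsub>G\<^esub> c) (- p)"
proof -
  interpret garside_parabolic G M \<Delta> \<delta>
    using garside_parabolic_if_parabolic[OF assms(1,2)] .
  have b: "b \<in> monoid_gen G (Div G M \<delta>)" using assms(2,7) unfolding parabolic_def by blast
  have c: "unmovable G M \<Delta> c" and \<theta>: "\<theta> = c \<otimes> \<Delta> [^] (- p)"
    using assms(5) by (simp_all add: right_form_def)
  have "HN_reduced G M \<Delta> \<delta> \<theta>" using assms(3,4) by simp
  then obtain a q where \<theta>_form: "right_form G M \<Delta> \<theta> a q"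
    and reduced: "q = 0 \<or> (q < 0 \<and> \<not> leL G M \<omega> a)"
    unfolding HN_reduced_def by blast
  have "a = c \<and> q = - p" using right_form_unique[OF assms(5) \<theta>_form] .
  then have "\<not> leL G M \<omega> c" using reduced assms(6) by auto
  then have bc: "unmovable G M \<Delta> (b \<otimes> c)" using unmovable_N_mult[OF c _ b] by blast
  have "b \<otimes> \<theta> = (b \<otimes> c) \<otimes> \<Delta> [^] (- p)"
    using \<theta> b N_subset_M c by (auto simp: unmovable_def m_assoc)
  with bc show ?thesis by (simp add: right_form_def)
qed

end
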